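(* Let $n\ge 2$, let $g_1(s),\dots,g_n(s)$ and $f(s)$ be rational proper transfer functions, and let $L$ be a real symmetric $n\times n$ graph Laplacian with eigenvalues $0=\lambda_1(L)\le\lambda_2(L)\le\cdots\le\lambda_n(L)$. Define $$T(s)=\big(I_n+\mathrm{diag}\{g_i(s)\}f(s)L\big)^{-1}\mathrm{diag}\{g_i(s)\}=\big(\mathrm{diag}\{g_i^{-1}(s)\}+f(s)L\big)^{-1},\qquad \bar g(s)=\Big(\frac1n\sum_{i=1}^n g_i^{-1}(s)\Big)^{-1}.$$ Let $s_0\in\mathbb{C}$ be a point that is not a pole of $f(s)$, and suppose there are constants $M_1,M_2>0$ with $|\bar g(s_0)|\le M_1$ and $\max_{1\le i\le n}|g_i^{-1}(s_0)|\le M_2$. Then, whenever $|f(s_0)|\lambda_2(L)> M_2+M_1M_2^2$, $$\Big\|T(s_0)-\frac1n\bar g(s_0)\mathbf{1}\mathbf{1}^\top\Big\|\le \frac{(M_1M_2+1)^2}{|f(s_0)|\lambda_2(L)-M_2-M_1M_2^2}.$$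
   Context: $\mathbf{1}=[1,\dots,1]^\top\in\mathbb{R}^n$, $I_n$ is the $n\times n$ identity, $\|\cdot\|$ is the spectral norm, and $\mathrm{diag}\{x_i\}$ is the diagonal matrix with entries $x_i$. A (weighted, undirected) graph Laplacian $L$ is real symmetric positive semidefinite with $L\mathbf{1}=0$; $\lambda_i(L)$ denotes its $i$-th smallest eigenvalue. *)

theory Defs
  imports "HOL-Analysis.Analysis" "HOL-Computational_Algebra.Computational_Algebra"
    "HOL-Library.Multiset" "HOL-Computational_Algebra.Field_as_Ring" "HOL-Computational_Algebra.Normalized_Fraction"
begin

text \<open>A rational transfer function is an element of the field of fractions of
complex polynomials; we use its normalized (coprime) numerator/denominator
representation.\<close>

type_synonym tf = "complex poly fract"

definition tf_num :: "tf \<Rightarrow> complex poly" where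
  "tf_num r = fst (quot_of_fract r)"

definition tf_den :: "tf \<Rightarrow> complex poly" where
  "tf_den r = snd (quot_of_fract r)"

definition proper_tf :: "tf \<Rightarrow> bool" where
  "proper_tf r \<longleftrightarrow> degree (tf_num r) \<le> degree (tf_den r)"

definition is_pole :: "tf \<Rightarrow> complex \<Rightarrow> bool" where
  "is_pole r s \<longleftrightarrow> poly (tf_den r) s = 0"

definition tf_eval :: "tf \<Rightarrow> complex \<Rightarrow> complex" where
  "tf_eval r s = poly (tf_num r) s / poly (tf_den r) s"

definition graph_laplacian :: "real^'n^'n \<Rightarrow> bool" where
  "graph_laplacian L \<longleftrightarrow> transpose L = L \<and> (\<forall>x. 0 \<le> x \<bullet> (L *v x)) \<and> L *v (\<chi> i. 1) = 0"

definition charpoly :: "real^'n^'n \<Rightarrow> real poly" where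
  "charpoly L = det (\<chi> i j. (if i = j then [:0, 1:] else 0) - [:L $ i $ j:])"

text \<open>Eigenvalues (roots of the characteristic polynomial with multiplicity),
sorted increasingly; eig L k is the k-th smallest (1-based).\<close>
definition eig :: "real^'n^'n \<Rightarrow> nat \<Rightarrow> real" where
  "eig L k = sorted_list_of_multiset (proots (charpoly L)) ! (k - 1)"

end

(*
  Write d_i = 1/g_i(s0), c = gbar(s0) and phi = f(s0), so that c * (d_1 + ... + d_n) = n and
  A = diag d + phi L. Given A z = y, split z = alpha 1 + w with w orthogonal to 1. Since
  L 1 = 0 and 1^T L = 0, summing the entries of y determines alpha through c, and
  z - (c/n)(1^T y) 1 = w - beta 1 with |beta| sqrt n <= M1 M2 |w|. Pairing y with w isolates
  phi w^* L w, whose modulus is at least lambda_2 |w|^2; all other terms are bounded by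
  |w| |y| and |w|^2, which yields (|phi| lambda_2 - M2 - M1 M2^2) |w| <= (1 + M1 M2) |y|.
  This gives injectivity of A and the operator norm bound for its inverse.

  Because eig is defined through the roots of the characteristic polynomial, the variational
  bound lambda_2 |w|^2 <= w^T L w on the complement of 1 is proved directly: a minimiser of the
  Rayleigh quotient there is an eigenvector, and its eigenvalue mu is at least the second
  smallest root, since 0 is a root as well and is a double root when mu = 0.
*)
theory Submission
  imports Defs
begin

(* Formal power series, imported by Defs, also use $ for coefficient access. *)
no_notation fps_nth (infixl "$" 75)

section \<open>Evaluating rational transfer functions\<close>

(* Unlike tf_eval, which reads off the reduced fraction, this accepts any representation whose
   denominator does not vanish at s; that is what makes it compatible with sums. *)
definition tf_has_value :: "tf \<Rightarrow> complex \<Rightarrow> complex \<Rightarrow> bool" where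
  "tf_has_value r s v \<longleftrightarrow> (\<exists>p q. r = Fract p q \<and> poly q s \<noteq> 0 \<and> v = poly p s / poly q s)"

lemma tf_has_value_iff: "tf_has_value r s v \<longleftrightarrow> \<not> is_pole r s \<and> tf_eval r s = v"
proof
  assume "tf_has_value r s v"
  then obtain p q where r: "r = Fract p q" and q: "poly q s \<noteq> 0" and v: "v = poly p s / poly q s"
    unfolding tf_has_value_def by blast
  define a b where "a = tf_num r" and "b = tf_den r"
  have rab: "r = Fract a b" and b: "b \<noteq> 0" and coprime: "coprime a b"
    unfolding a_def b_def tf_num_def tf_den_def by (simp_all add: coprime_quot_of_fract)
  have cross: "a * q = p * b"
    using r rab b q by (metis eq_fract(1) poly_0)
  then have "b dvd q"
    using coprime by (metis coprime_commute coprime_dvd_mult_right_iff dvd_triv_right)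
  with q have b_s: "poly b s \<noteq> 0"
    by auto
  have "poly a s * poly q s = (v * poly b s) * poly q s"
    using arg_cong[OF cross, of "\<lambda>x. poly x s"] q v by simp
  with q b_s have "poly a s / poly b s = v"
    by (simp add: field_simps)
  with b_s show "\<not> is_pole r s \<and> tf_eval r s = v"
    unfolding is_pole_def tf_eval_def a_def b_def by simp
next
  assume "\<not> is_pole r s \<and> tf_eval r s = v"
  then show "tf_has_value r s v"
    unfolding tf_has_value_def is_pole_def tf_eval_def tf_num_def tf_den_def
    by (metis Fract_quot_of_fract prod.collapse)
qed

lemma tf_has_value_add:
  assumes "tf_has_value r s v" "tf_has_value r' s v'"
  shows "tf_has_value (r + r') s (v + v')"
proof -
  obtain p q p' q' where r: "r = Fract p q" and q: "poly q s \<noteq> 0" and v: "v = poly p s / poly q s"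
    and r': "r' = Fract p' q'" and q': "poly q' s \<noteq> 0" and v': "v' = poly p' s / poly q' s"
    using assms unfolding tf_has_value_def by blast
  show ?thesis
    unfolding tf_has_value_def
  proof (intro exI conjI)
    show "r + r' = Fract (p * q' + p' * q) (q * q')"
      using r r' q q' by (metis add_fract poly_0)
    show "poly (q * q') s \<noteq> 0"
      using q q' by simp
    show "v + v' = poly (p * q' + p' * q) s / poly (q * q') s"
      using v v' q q' by (simp add: add_frac_eq)
  qed
qed

lemma tf_has_value_sum:
  assumes "finite I" "\<And>i. i \<in> I \<Longrightarrow> tf_has_value (r i) s (v i)"
  shows "tf_has_value (\<Sum>i\<in>I. r i) s (\<Sum>i\<in>I. v i)"
  using assms
proof (induction I rule: finite_induct)
  case empty
  show ?case
    unfolding tf_has_value_def by (rule exI[of _ 0], rule exI[of _ 1]) (simp add: Zero_fract_def)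
qed (simp add: tf_has_value_add)

lemma tf_has_value_divide_of_nat:
  assumes "tf_has_value r s v" "m > 0"
  shows "tf_has_value (r / of_nat m) s (v / of_nat m)"
proof -
  obtain p q where r: "r = Fract p q" and q: "poly q s \<noteq> 0" and v: "v = poly p s / poly q s"
    using assms(1) unfolding tf_has_value_def by blast
  show ?thesis
    unfolding tf_has_value_def
  proof (intro exI conjI)
    show "r / of_nat m = Fract p (smult (of_nat m) q)"
      using r q assms(2) by (auto simp: of_nat_fract of_nat_poly mult.commute)
    show "poly (smult (of_nat m) q) s \<noteq> 0"
      using q assms(2) by simp
    show "v / of_nat m = poly p s / poly (smult (of_nat m) q) s"
      using v by simp
  qed
qed

lemma tf_eval_inverse_mult:
  assumes "tf_has_value r s v" "r \<noteq> 0" "\<not> is_pole (inverse r) s"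
  shows "tf_eval (inverse r) s * v = 1"
proof -
  obtain p q where r: "r = Fract p q" and q: "poly q s \<noteq> 0" and v: "v = poly p s / poly q s"
    using assms(1) unfolding tf_has_value_def by blast
  have p: "p \<noteq> 0"
    using r assms(2) by (auto simp: fract_collapse)
  have "tf_has_value (inverse r) s (tf_eval (inverse r) s)"
    using assms(3) by (simp add: tf_has_value_iff)
  then obtain a b where inv: "inverse r = Fract a b" and b: "poly b s \<noteq> 0"
    and val: "tf_eval (inverse r) s = poly a s / poly b s"
    unfolding tf_has_value_def by blast
  have "q * b = a * p"
    using inv r p b by (metis eq_fract(1) inverse_fract poly_0)
  then have "poly a s * poly p s = poly b s * poly q s"
    by (metis mult.commute poly_mult)
  with q b show ?thesis
    unfolding val v by simp
qed

lemma tf_eval_inverse_mean_mult_sum: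
  fixes h :: "'n::finite \<Rightarrow> tf"
  assumes "\<And>i. \<not> is_pole (h i) s" "(\<Sum>i\<in>UNIV. h i) \<noteq> 0"
    and "\<not> is_pole (inverse ((\<Sum>i\<in>UNIV. h i) / of_nat CARD('n))) s"
  shows "tf_eval (inverse ((\<Sum>i\<in>UNIV. h i) / of_nat CARD('n))) s * (\<Sum>i\<in>UNIV. tf_eval (h i) s)
    = of_nat CARD('n)"
proof -
  have "tf_has_value (h i) s (tf_eval (h i) s)" for i
    using assms(1) by (simp add: tf_has_value_iff)
  then have "tf_has_value (\<Sum>i\<in>UNIV. h i) s (\<Sum>i\<in>UNIV. tf_eval (h i) s)"
    by (simp add: tf_has_value_sum)
  then have mean: "tf_has_value ((\<Sum>i\<in>UNIV. h i) / of_nat CARD('n)) s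
      ((\<Sum>i\<in>UNIV. tf_eval (h i) s) / of_nat CARD('n))"
    by (rule tf_has_value_divide_of_nat) simp
  have "(of_nat CARD('n) :: tf) \<noteq> 0"
    by (simp add: of_nat_fract Zero_fract_def eq_fract)
  with assms(2) have "(\<Sum>i\<in>UNIV. h i) / of_nat CARD('n) \<noteq> 0"
    by simp
  from tf_eval_inverse_mult[OF mean this assms(3)] show ?thesis
    by (simp add: field_simps)
qed

section \<open>The second smallest Laplacian eigenvalue\<close>

lemma poly_det: "poly (det P) a = det (\<chi> i j. poly (P $ i $ j) a)"
  unfolding det_def by (simp add: poly_sum poly_prod)

lemma poly_charpoly: "poly (charpoly L) t = det (mat t - L)"
  unfolding charpoly_def poly_det
  by (rule arg_cong[where f = det]) (simp add: vec_eq_iff mat_def)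

lemma det_eq_0_iff_kernel:
  fixes M :: "'a::field^'n^'n"
  shows "det M = 0 \<longleftrightarrow> (\<exists>x. x \<noteq> 0 \<and> M *v x = 0)"
  using det_nz_iff_inj_gen[OF matrix_vector_mul_linear_gen, of M]
  by (auto simp: matrix_of_matrix_vector_mul vec.inj_iff_eq_0)

lemma matrix_vector_mult_mat: "mat t *v x = t *s x"
  by (simp add: vec_eq_iff matrix_vector_mult_def mat_def if_distrib[of "\<lambda>u. u * _"] cong: if_cong)

lemma charpoly_root_if_eigenvector:
  assumes "L *v x = t *s x" "x \<noteq> 0"
  shows "poly (charpoly L) t = 0"
proof -
  have "(mat t - L) *v x = 0"
    using assms(1) by (simp add: matrix_vector_mult_diff_rdistrib matrix_vector_mult_mat)
  with assms(2) show ?thesis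
    unfolding poly_charpoly det_eq_0_iff_kernel by blast
qed

lemma charpoly_neq_0_if_psd:
  fixes L :: "real^'n^'n"
  assumes "\<And>x. 0 \<le> x \<bullet> (L *v x)"
  shows "charpoly L \<noteq> 0"
proof -
  have "\<not> (L *v x = (-1) *s x \<and> x \<noteq> 0)" for x
  proof
    assume "L *v x = (-1) *s x \<and> x \<noteq> 0"
    with assms[of x] have "x \<bullet> x \<le> 0" "x \<noteq> 0"
      by auto
    then show False
      by (metis inner_eq_zero_iff inner_ge_zero order_antisym)
  qed
  then have "det (mat (-1) - L) \<noteq> 0"
    unfolding det_eq_0_iff_kernel
    by (auto simp: matrix_vector_mult_diff_rdistrib matrix_vector_mult_mat)
  then have "poly (charpoly L) (-1) \<noteq> 0"
    by (simp add: poly_charpoly)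
  then show ?thesis
    by auto
qed

lemma sum_scaled_rows:
  fixes A :: "'a::comm_semiring_1^'n^'n"
  shows "(\<Sum>l\<in>UNIV. v $ l *s row l A) = transpose A *v v"
  by (auto simp: vec_eq_iff sum_component row_def transpose_def matrix_vector_mult_def
      mult.commute intro!: sum.cong)

(* Cramer's rule on the transposed matrix replaces rows i and j by the eigenvectors,
   each replacement contributing a factor t - mu. *)
lemma det_char_matrix_two_eigenvectors:
  fixes L :: "real^'n^'n"
  assumes u: "L *v u = \<mu> *s u" "u $ i = 1" "u $ j = 0"
    and v: "L *v v = \<mu> *s v" "v $ i = 0" "v $ j = 1"
  shows "det (mat t - L) = (t - \<mu>)^2 *
    det (\<chi> k. if k = i then u else if k = j then v else row k (transpose (mat t - L)))"
proof -
  have ij: "i \<noteq> j"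
    using u(2,3) by auto
  define A where "A = transpose (mat t - L)"
  have rows_A: "(\<Sum>l\<in>UNIV. w $ l *s row l A) = (t - \<mu>) *s w" if "L *v w = \<mu> *s w" for w
    unfolding sum_scaled_rows A_def transpose_transpose
    using that by (simp add: matrix_vector_mult_diff_rdistrib matrix_vector_mult_mat vec_eq_iff algebra_simps)
  define A1 where "A1 = (\<chi> k. if k = i then (t - \<mu>) *s u else row k A)"
  have det_A1: "det A1 = det A"
    using cramer_lemma_transpose[of i u A] u(2) unfolding rows_A[OF u(1)] A1_def by simp
  have "(\<Sum>l\<in>UNIV. v $ l *s row l A1) = (\<Sum>l\<in>UNIV. v $ l *s row l A)"
    by (rule sum.cong) (auto simp: A1_def row_def v(2) vec_eq_iff)
  then have rows_A1: "(\<Sum>l\<in>UNIV. v $ l *s row l A1) = (t - \<mu>) *s v"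
    using rows_A[OF v(1)] by simp
  define A2 where "A2 = (\<chi> k. if k = j then (t - \<mu>) *s v else row k A1)"
  have det_A2: "det A2 = det A1"
    using cramer_lemma_transpose[of j v A1] v(3) unfolding rows_A1 A2_def by simp
  have "A2 = (\<chi> k. if k = j then (t - \<mu>) *s v else if k = i then (t - \<mu>) *s u else row k A)"
    unfolding A2_def A1_def by (simp add: vec_eq_iff row_def)
  then have "det A2 = (t - \<mu>) * det (\<chi> k. if k = j then v else if k = i then (t - \<mu>) *s u else row k A)"
    using det_row_mul[of j "t - \<mu>" "\<lambda>_. v" "\<lambda>k. if k = i then (t - \<mu>) *s u else row k A"] by simp
  also have "(\<chi> k. if k = j then v else if k = i then (t - \<mu>) *s u else row k A)
      = (\<chi> k. if k = i then (t - \<mu>) *s u else if k = j then v else row k A)"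
    using ij by (simp add: vec_eq_iff)
  also have "det \<dots> = (t - \<mu>) * det (\<chi> k. if k = i then u else if k = j then v else row k A)"
    using det_row_mul[of i "t - \<mu>" "\<lambda>_. u" "\<lambda>k. if k = j then v else row k A"] by simp
  finally show ?thesis
    using det_A1 det_A2 unfolding A_def det_transpose by (simp add: power2_eq_square)
qed

lemma charpoly_double_root_if_two_eigenvectors:
  fixes L :: "real^'n^'n"
  assumes x: "L *v x = \<mu> *s x" and y: "L *v y = \<mu> *s y"
    and minor: "x $ i * y $ j \<noteq> x $ j * y $ i"
  shows "[:-\<mu>, 1:]^2 dvd charpoly L"
proof -
  define \<delta> where "\<delta> = x $ i * y $ j - x $ j * y $ i"
  have \<delta>: "\<delta> \<noteq> 0"
    using minor by (simp add: \<delta>_def)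
  define u where "u = (1 / \<delta>) *s (y $ j *s x - x $ j *s y)"
  define v where "v = (1 / \<delta>) *s (x $ i *s y - y $ i *s x)"
  have eigen: "L *v u = \<mu> *s u" "L *v v = \<mu> *s v"
    unfolding u_def v_def
    by (simp_all add: matrix_vector_mult_diff_distrib vector_scalar_commute x y vec_eq_iff algebra_simps)
  have "u $ i = (x $ i * y $ j - x $ j * y $ i) / \<delta>" "v $ j = (x $ i * y $ j - x $ j * y $ i) / \<delta>"
    by (simp_all add: u_def v_def algebra_simps diff_divide_distrib)
  then have coords: "u $ i = 1" "u $ j = 0" "v $ i = 0" "v $ j = 1"
    using \<delta> unfolding \<delta>_def[symmetric] by (simp_all add: u_def v_def mult.commute)
  define NP :: "real poly^'n^'n" where "NP = (\<chi> k l. if k = i then [:u $ l:] else if k = j then [:v $ l:]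
      else (if k = l then [:0, 1:] else 0) - [:L $ l $ k:])"
  have "poly (charpoly L) t = poly ([:-\<mu>, 1:]^2 * det NP) t" for t
  proof -
    have "(\<chi> k l. poly (NP $ k $ l) t)
        = (\<chi> k. if k = i then u else if k = j then v else row k (transpose (mat t - L)))"
      unfolding NP_def by (simp add: vec_eq_iff row_def transpose_def mat_def)
    then show ?thesis
      using det_char_matrix_two_eigenvectors[OF eigen(1) coords(1,2) eigen(2) coords(3,4), of t]
      by (simp add: poly_charpoly poly_det)
  qed
  then have "charpoly L = [:-\<mu>, 1:]^2 * det NP"
    by (simp only: poly_eq_poly_eq_iff[symmetric]) (rule ext)
  then show ?thesis
    by simp
qed

lemma sorted_nth_1_le:
  fixes s :: "'a::linorder list"
  assumes "sorted s" "2 \<le> length (filter (\<lambda>x. x \<le> \<mu>) s)"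
  shows "s ! 1 \<le> \<mu>"
proof (rule ccontr)
  assume less: "\<not> s ! 1 \<le> \<mu>"
  have "2 \<le> length s"
    using assms(2) length_filter_le order_trans by blast
  then obtain a b r where s: "s = a # b # r"
    by (metis One_nat_def Suc_1 Suc_le_length_iff)
  have "\<not> c \<le> \<mu>" if "c \<in> set (b # r)" for c
    using that assms(1) less s by auto
  then have "filter (\<lambda>x. x \<le> \<mu>) (b # r) = []"
    by (simp only: filter_empty_conv) blast
  with assms(2) s show False
    by (auto split: if_splits)
qed

lemma eig_2_le:
  assumes "2 \<le> size (filter_mset (\<lambda>x. x \<le> \<mu>) (proots (charpoly L)))"
  shows "eig L 2 \<le> \<mu>"
proof -
  define s where "s = sorted_list_of_multiset (proots (charpoly L))"
  have "length (filter (\<lambda>x. x \<le> \<mu>) s) = size (filter_mset (\<lambda>x. x \<le> \<mu>) (proots (charpoly L)))"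
    unfolding s_def by (metis mset_filter mset_sorted_list_of_multiset size_mset)
  with assms have "s ! 1 \<le> \<mu>"
    by (intro sorted_nth_1_le) (simp_all add: s_def)
  then show ?thesis
    by (simp add: eig_def s_def)
qed

lemma exists_coords_neq_if_sum_eq_0:
  fixes x :: "'a::field_char_0^'n"
  assumes "(\<Sum>i\<in>UNIV. x $ i) = 0" "x \<noteq> 0"
  obtains i j where "x $ i \<noteq> x $ j"
proof -
  obtain a where "x $ a \<noteq> 0"
    using assms(2) by (auto simp: vec_eq_iff)
  moreover have "\<exists>i. x $ i \<noteq> x $ a"
  proof (rule ccontr)
    assume "\<nexists>i. x $ i \<noteq> x $ a"
    then have "(\<Sum>i\<in>UNIV. x $ i) = (\<Sum>i\<in>(UNIV::'n set). x $ a)"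
      by (intro sum.cong) auto
    with assms(1) \<open>x $ a \<noteq> 0\<close> show False
      by simp
  qed
  ultimately show ?thesis
    using that by blast
qed

lemma psd_eigenvalue_nonneg:
  fixes L :: "real^'n^'n"
  assumes "\<And>x. 0 \<le> x \<bullet> (L *v x)" "L *v x = \<mu> *s x" "x \<noteq> 0"
  shows "0 \<le> \<mu>"
proof -
  have "0 \<le> \<mu> * (x \<bullet> x)"
    using assms(1)[of x] assms(2) by (simp add: scalar_mult_eq_scaleR)
  moreover have "0 < x \<bullet> x"
    using assms(3) by simp
  ultimately show ?thesis
    by (simp add: zero_le_mult_iff)
qed

lemma laplacian_eig_2_le_eigenvalue:
  fixes L :: "real^'n^'n"
  assumes lap: "graph_laplacian L"
    and x: "L *v x = \<mu> *s x" "x \<noteq> 0" "(\<Sum>i\<in>UNIV. x $ i) = 0"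
  shows "eig L 2 \<le> \<mu>"
proof -
  have psd: "\<And>x. 0 \<le> x \<bullet> (L *v x)" and ones: "L *v (\<chi> i. 1) = 0 *s (\<chi> i. 1)"
    using lap unfolding graph_laplacian_def by auto
  have nz: "charpoly L \<noteq> 0"
    using charpoly_neq_0_if_psd[OF psd] .
  have "0 \<le> \<mu>"
    using psd_eigenvalue_nonneg[OF psd x(1,2)] .
  have root_0: "0 \<in># proots (charpoly L)"
    using charpoly_root_if_eigenvector[OF ones] nz by (simp add: vec_eq_iff)
  have "{#0, \<mu>#} \<subseteq># filter_mset (\<lambda>t. t \<le> \<mu>) (proots (charpoly L))"
  proof (cases "\<mu> = 0")
    case True
    obtain i j where "x $ i \<noteq> x $ j"
      using exists_coords_neq_if_sum_eq_0[OF x(3,2)] .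
    then have "[:-0, 1:]^2 dvd charpoly L"
      using charpoly_double_root_if_two_eigenvectors[of L x 0 "\<chi> i. 1" i j] x(1) ones True
      by simp
    then have "2 \<le> count (proots (charpoly L)) 0"
      using nz order_divides[of 0 2 "charpoly L"] by (simp add: count_proots)
    with True show ?thesis
      by (auto simp: subseteq_mset_def)
  next
    case False
    have "\<mu> \<in># proots (charpoly L)"
      using charpoly_root_if_eigenvector[OF x(1,2)] nz by simp
    with root_0 False \<open>0 \<le> \<mu>\<close> show ?thesis
      by (auto simp: subseteq_mset_def)
  qed
  then have "2 \<le> size (filter_mset (\<lambda>t. t \<le> \<mu>) (proots (charpoly L)))"
    using size_mset_mono by fastforce
  then show ?thesis
    by (rule eig_2_le)
qed

lemma linear_coeff_eq_0_if_quadratic_nonneg: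
  fixes a c :: real
  assumes nonneg: "\<And>t. 0 \<le> a * t + c * t^2"
  shows "a = 0"
proof (rule ccontr)
  assume "a \<noteq> 0"
  define k where "k = \<bar>c\<bar> + 1"
  have "k > 0"
    by (simp add: k_def add_nonneg_pos)
  define t where "t = - a / k"
  have "a * t + c * t^2 \<le> a * t + (k - 1) * t^2"
    by (simp add: k_def mult_right_mono)
  also have "\<dots> = - (a^2 / k^2)"
    using \<open>k > 0\<close> by (simp add: t_def field_simps power2_eq_square)
  also have "\<dots> < 0"
    using \<open>a \<noteq> 0\<close> \<open>k > 0\<close> by simp
  finally show False
    using nonneg[of t] by simp
qed

lemma inner_symmetric_matrix:
  fixes L :: "real^'n^'n"
  assumes "transpose L = L"
  shows "x \<bullet> (L *v y) = (L *v x) \<bullet> y"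
  by (metis assms dot_lmul_matrix transpose_matrix_vector)

lemma rayleigh_minimizer_eigenvector:
  fixes L :: "real^'n^'n"
  assumes sym: "transpose L = L" and S: "subspace S" "\<And>y. y \<in> S \<Longrightarrow> L *v y \<in> S"
    and x: "x \<in> S" "x \<bullet> (L *v x) = \<mu> * (x \<bullet> x)"
    and min: "\<And>y. y \<in> S \<Longrightarrow> \<mu> * (y \<bullet> y) \<le> y \<bullet> (L *v y)"
  shows "L *v x = \<mu> *s x"
proof -
  define r where "r = L *v x - \<mu> *\<^sub>R x"
  have r: "r \<in> S"
    unfolding r_def using S x(1) by (simp add: subspace_diff subspace_scale)
  \<comment> \<open>minimality along x + t r forces the linear coefficient 2 (r \<bullet> r) to vanish\<close>
  have "0 \<le> (2 * (r \<bullet> r)) * t + (r \<bullet> (L *v r) - \<mu> * (r \<bullet> r)) * t^2" for t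
  proof -
    define z where "z = x + t *\<^sub>R r"
    have "z \<in> S"
      unfolding z_def using S(1) x(1) r by (simp add: subspace_add subspace_scale)
    have "x \<bullet> (L *v r) = r \<bullet> (L *v x)"
      by (metis inner_symmetric_matrix[OF sym] inner_commute)
    then have Lz: "z \<bullet> (L *v z) = x \<bullet> (L *v x) + 2 * t * (r \<bullet> (L *v x)) + t^2 * (r \<bullet> (L *v r))"
      by (simp add: z_def matrix_vector_right_distrib matrix_vector_mult_scaleR inner_add_left
          inner_add_right power2_eq_square algebra_simps)
    have zz: "z \<bullet> z = x \<bullet> x + 2 * t * (r \<bullet> x) + t^2 * (r \<bullet> r)"
      by (simp add: z_def inner_add_left inner_add_right inner_commute[of x r] power2_eq_square algebra_simps)
    have "r \<bullet> (L *v x) = r \<bullet> r + \<mu> * (r \<bullet> x)"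
      by (simp add: r_def inner_diff_right algebra_simps)
    then have "z \<bullet> (L *v z) - \<mu> * (z \<bullet> z) = (2 * (r \<bullet> r)) * t + (r \<bullet> (L *v r) - \<mu> * (r \<bullet> r)) * t^2"
      unfolding Lz zz x(2) by (simp add: algebra_simps)
    with min[OF \<open>z \<in> S\<close>] show ?thesis
      by simp
  qed
  then have "2 * (r \<bullet> r) = 0"
    by (rule linear_coeff_eq_0_if_quadratic_nonneg)
  then show ?thesis
    by (simp add: r_def scalar_mult_eq_scaleR)
qed

lemma rayleigh_minimizer_exists:
  fixes L :: "real^'n^'n"
  assumes S: "subspace S" and y0: "y0 \<in> S" "y0 \<noteq> 0"
  obtains x where "x \<in> S" "x \<bullet> x = 1" "\<And>y. y \<in> S \<Longrightarrow> (x \<bullet> (L *v x)) * (y \<bullet> y) \<le> y \<bullet> (L *v y)"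
proof -
  define Q where "Q y = y \<bullet> (L *v y)" for y :: "real^'n"
  have Q_scale: "Q (c *\<^sub>R y) = c^2 * Q y" for c y
    by (simp add: Q_def matrix_vector_mult_scaleR power2_eq_square)
  have "compact (S \<inter> sphere 0 1)"
    using closed_subspace[OF S] compact_sphere by (rule closed_Int_compact)
  moreover have "y0 /\<^sub>R norm y0 \<in> S \<inter> sphere 0 1"
    using S y0 by (simp add: subspace_scale)
  moreover have "continuous_on (S \<inter> sphere 0 1) Q"
    unfolding Q_def by (intro continuous_intros)
  ultimately obtain x where x: "x \<in> S \<inter> sphere 0 1" and min: "\<And>u. u \<in> S \<inter> sphere 0 1 \<Longrightarrow> Q x \<le> Q u"
    using continuous_attains_inf[of "S \<inter> sphere 0 1" Q] by blast
  have "Q x * (y \<bullet> y) \<le> Q y" if "y \<in> S" for y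
  proof (cases "y = 0")
    case False
    have "Q x \<le> Q (y /\<^sub>R norm y)"
      using min S that False by (simp add: subspace_scale)
    then show ?thesis
      using False by (simp add: Q_scale power_divide field_simps dot_square_norm)
  qed (simp add: Q_def)
  moreover have "x \<bullet> x = 1"
    using x by (simp add: dot_square_norm)
  ultimately show ?thesis
    using that x unfolding Q_def by blast
qed

lemma laplacian_eig_2_le_rayleigh:
  fixes L :: "real^'n^'n"
  assumes lap: "graph_laplacian L" and n: "2 \<le> CARD('n)" and y: "(\<Sum>i\<in>UNIV. y $ i) = 0"
  shows "eig L 2 * (y \<bullet> y) \<le> y \<bullet> (L *v y)"
proof -
  have sym: "transpose L = L" and ones: "L *v (\<chi> i. 1) = 0"
    using lap unfolding graph_laplacian_def by auto
  define S where "S = {v :: real^'n. (\<Sum>i\<in>UNIV. v $ i) = 0}"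
  have sum_eq_inner: "(\<Sum>i\<in>UNIV. v $ i) = (\<chi> i. 1) \<bullet> v" for v :: "real^'n"
    by (simp add: inner_vec_def)
  have S: "subspace S"
    unfolding subspace_def S_def by (simp add: sum.distrib sum_distrib_left[symmetric])
  have invariant: "L *v v \<in> S" for v
  proof -
    have "(\<Sum>i\<in>UNIV. (L *v v) $ i) = (L *v (\<chi> i. 1)) \<bullet> v"
      unfolding sum_eq_inner by (rule inner_symmetric_matrix[OF sym])
    then show ?thesis
      using ones by (simp add: S_def)
  qed
  obtain a b :: 'n where "a \<noteq> b"
    using n by (meson card_2_iff' ex_card)
  then have "axis a 1 - axis b 1 \<in> S" "axis a 1 - axis b 1 \<noteq> (0 :: real^'n)"
    by (auto simp: S_def sum_subtractf axis_def vec_eq_iff)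
  then obtain x where x: "x \<in> S" "x \<bullet> x = 1"
    and min: "\<And>v. v \<in> S \<Longrightarrow> (x \<bullet> (L *v x)) * (v \<bullet> v) \<le> v \<bullet> (L *v v)"
    using rayleigh_minimizer_exists[OF S] by blast
  have "L *v x = (x \<bullet> (L *v x)) *s x"
    using rayleigh_minimizer_eigenvector[OF sym S invariant x(1) _ min] x(2) by simp
  moreover have "x \<noteq> 0"
    using x(2) by auto
  ultimately have "eig L 2 \<le> x \<bullet> (L *v x)"
    using laplacian_eig_2_le_eigenvalue[OF lap] x(1) by (simp add: S_def)
  then have "eig L 2 * (y \<bullet> y) \<le> (x \<bullet> (L *v x)) * (y \<bullet> y)"
    by (simp add: mult_right_mono)
  also have "\<dots> \<le> y \<bullet> (L *v y)"
    using min y by (simp add: S_def)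
  finally show ?thesis .
qed

section \<open>Estimates for the perturbed Laplacian\<close>

definition of_real_matrix :: "real^'n^'m \<Rightarrow> complex^'n^'m" where
  "of_real_matrix L = (\<chi> i j. complex_of_real (L $ i $ j))"

lemma of_real_matrix_mult_component:
  "(of_real_matrix L *v z) $ i = (\<Sum>j\<in>UNIV. complex_of_real (L $ i $ j) * z $ j)"
  by (simp add: of_real_matrix_def matrix_vector_mult_def)

lemma norm_vec_power2: "(norm (x::complex^'n))^2 = (\<Sum>i\<in>UNIV. (cmod (x $ i))^2)"
  unfolding norm_vec_def L2_set_def by (simp add: sum_nonneg)

lemma norm_sum_mult_le: "cmod (\<Sum>i\<in>UNIV. a $ i * b $ i) \<le> norm (a::complex^'n) * norm (b::complex^'n)"
proof -
  have "cmod (\<Sum>i\<in>UNIV. a $ i * b $ i) \<le> (\<Sum>i\<in>UNIV. \<bar>cmod (a $ i)\<bar> * \<bar>cmod (b $ i)\<bar>)"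
    using norm_sum[of "\<lambda>i. a $ i * b $ i"] by (simp add: norm_mult)
  also have "\<dots> \<le> L2_set (\<lambda>i. cmod (a $ i)) UNIV * L2_set (\<lambda>i. cmod (b $ i)) UNIV"
    by (rule L2_set_mult_ineq)
  finally show ?thesis
    by (simp add: norm_vec_def)
qed

lemma norm_cnj_vec: "norm (\<chi> i. cnj (x $ i)) = norm (x::complex^'n)"
  by (simp add: norm_vec_def)

lemma norm_const_vec: "norm ((\<chi> i. c) :: complex^'n) = cmod c * sqrt CARD('n)"
  unfolding norm_vec_def L2_set_def by (simp add: real_sqrt_mult)

lemma norm_le_sqrt_card_mult:
  assumes "\<And>i. cmod (x $ i) \<le> M"
  shows "norm (x::complex^'n) \<le> sqrt CARD('n) * M"
proof -
  have "0 \<le> M"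
    using assms[of undefined] norm_ge_zero order_trans by blast
  have "(norm x)^2 \<le> (\<Sum>i\<in>(UNIV::'n set). M^2)"
    unfolding norm_vec_power2 by (intro sum_mono power_mono assms) auto
  then have "(norm x)^2 \<le> (sqrt CARD('n) * M)^2"
    by (simp add: power_mult_distrib)
  with \<open>0 \<le> M\<close> show ?thesis
    by (simp add: power2_le_iff_abs_le)
qed

lemma cmod_sum_le: "cmod (\<Sum>i\<in>UNIV. x $ i) \<le> sqrt CARD('n) * norm (x::complex^'n)"
  using norm_sum_mult_le[of "\<chi> i. 1" x] by (simp add: norm_const_vec)

lemma cmod_sum_mult_le:
  assumes "\<And>i. cmod (d $ i) \<le> M"
  shows "cmod (\<Sum>i\<in>UNIV. d $ i * w $ i) \<le> sqrt CARD('n) * M * norm (w::complex^'n)"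
  using norm_sum_mult_le[of d w] norm_le_sqrt_card_mult[OF assms]
  by (meson mult_right_mono norm_ge_zero order_trans)

lemma re_quadratic_form_of_real_matrix:
  fixes L :: "real^'n^'n" and z :: "complex^'n"
  shows "Re (\<Sum>i\<in>UNIV. cnj (z $ i) * (of_real_matrix L *v z) $ i)
    = (\<chi> i. Re (z $ i)) \<bullet> (L *v (\<chi> i. Re (z $ i))) + (\<chi> i. Im (z $ i)) \<bullet> (L *v (\<chi> i. Im (z $ i)))"
  by (simp add: of_real_matrix_def Re_sum inner_vec_def matrix_vector_mult_def
      sum_distrib_left sum.distrib[symmetric] algebra_simps)

lemma laplacian_eig_2_le_complex_rayleigh:
  fixes L :: "real^'n^'n" and z :: "complex^'n"
  assumes lap: "graph_laplacian L" and n: "2 \<le> CARD('n)" and z: "(\<Sum>i\<in>UNIV. z $ i) = 0"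
  shows "eig L 2 * (norm z)^2 \<le> cmod (\<Sum>i\<in>UNIV. cnj (z $ i) * (of_real_matrix L *v z) $ i)"
proof -
  define a b :: "real^'n" where "a = (\<chi> i. Re (z $ i))" and "b = (\<chi> i. Im (z $ i))"
  have "(\<Sum>i\<in>UNIV. a $ i) = 0" "(\<Sum>i\<in>UNIV. b $ i) = 0"
    using arg_cong[OF z, of Re] arg_cong[OF z, of Im] by (simp_all add: a_def b_def Re_sum Im_sum)
  then have "eig L 2 * (a \<bullet> a + b \<bullet> b) \<le> a \<bullet> (L *v a) + b \<bullet> (L *v b)"
    using laplacian_eig_2_le_rayleigh[OF lap n] by (simp add: distrib_left add_mono)
  moreover have "(norm z)^2 = a \<bullet> a + b \<bullet> b"
    unfolding norm_vec_power2 a_def b_def cmod_power2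
    by (simp add: inner_vec_def sum.distrib power2_eq_square)
  ultimately show ?thesis
    using complex_Re_le_cmod re_quadratic_form_of_real_matrix[of z L]
    unfolding a_def b_def by (smt (verit))
qed

lemma of_real_matrix_mult_const:
  assumes "L *v (\<chi> i. 1) = 0"
  shows "of_real_matrix L *v (\<chi> i. a) = 0"
proof -
  have "(\<Sum>j\<in>UNIV. L $ i $ j) = 0" for i
    using arg_cong[OF assms, of "\<lambda>v. v $ i"] by (simp add: matrix_vector_mult_def)
  then show ?thesis
    by (simp add: vec_eq_iff of_real_matrix_mult_component sum_distrib_right[symmetric]
        of_real_sum[symmetric])
qed

lemma sum_of_real_matrix_mult:
  assumes "(\<chi> i. 1) v* L = 0"
  shows "(\<Sum>i\<in>UNIV. (of_real_matrix L *v w) $ i) = 0"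
proof -
  have "(\<Sum>i\<in>UNIV. L $ i $ j) = 0" for j
    using arg_cong[OF assms, of "\<lambda>v. v $ j"] by (simp add: vector_matrix_mult_def)
  then show ?thesis
    unfolding of_real_matrix_mult_component
    by (subst sum.swap) (simp add: sum_distrib_right[symmetric] of_real_sum[symmetric])
qed

lemma norm_sub_scaled_ones_le:
  fixes w d :: "complex^'n"
  assumes c: "cmod c \<le> M1" and d: "\<And>i. cmod (d $ i) \<le> M2"
  shows "norm (w - (c / of_nat CARD('n) * (\<Sum>i\<in>UNIV. d $ i * w $ i)) *s (\<chi> i. 1))
    \<le> (1 + M1 * M2) * norm w"
proof -
  define n where "n = real CARD('n)"
  define \<beta> where "\<beta> = c / of_nat CARD('n) * (\<Sum>i\<in>UNIV. d $ i * w $ i)"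
  have "0 < n"
    by (simp add: n_def)
  have "0 \<le> M1"
    using c norm_ge_zero order_trans by blast
  have "(\<beta> *s (\<chi> i. 1) :: complex^'n) = (\<chi> i. \<beta>)"
    by (simp add: vec_eq_iff)
  then have "norm (\<beta> *s (\<chi> i. 1) :: complex^'n) = cmod \<beta> * sqrt n"
    by (simp add: norm_const_vec n_def)
  also have "\<dots> \<le> M1 / n * (sqrt n * M2 * norm w) * sqrt n"
    unfolding \<beta>_def norm_mult norm_divide n_def using c cmod_sum_mult_le[OF d, of w] \<open>0 \<le> M1\<close>
    by (intro mult_right_mono mult_mono) (auto simp: divide_right_mono)
  also have "\<dots> = M1 * M2 * norm w"
    using \<open>0 < n\<close> by (simp add: field_simps)
  finally show ?thesis
    using norm_triangle_ineq4[of w "\<beta> *s (\<chi> i. 1)"] by (simp add: \<beta>_def algebra_simps)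
qed

lemma cmod_sum_cnj_mult_le:
  assumes "\<And>i. cmod (d $ i) \<le> M"
  shows "cmod (\<Sum>i\<in>UNIV. cnj (w $ i) * (d $ i * w $ i)) \<le> M * (norm (w::complex^'n))^2"
proof -
  have "cmod (cnj (w $ i) * (d $ i * w $ i)) = cmod (d $ i) * (cmod (w $ i))^2" for i
    by (simp add: norm_mult power2_eq_square)
  then have "cmod (\<Sum>i\<in>UNIV. cnj (w $ i) * (d $ i * w $ i)) \<le> (\<Sum>i\<in>UNIV. M * (cmod (w $ i))^2)"
    using assms by (intro order_trans[OF norm_sum] sum_mono) (simp add: mult_right_mono)
  then show ?thesis
    by (simp add: norm_vec_power2 sum_distrib_left)
qed

lemma cmod_scaled_sum_diff_le:
  fixes y w d :: "complex^'n"
  assumes c: "cmod c \<le> M1" and d: "\<And>i. cmod (d $ i) \<le> M2"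
  shows "cmod (c / of_nat CARD('n) * ((\<Sum>i\<in>UNIV. y $ i) - (\<Sum>i\<in>UNIV. d $ i * w $ i))) * sqrt CARD('n)
    \<le> M1 * (norm y + M2 * norm w)"
proof -
  define n where "n = real CARD('n)"
  have "0 < n"
    by (simp add: n_def)
  have "0 \<le> M1"
    using c norm_ge_zero order_trans by blast
  have "cmod ((\<Sum>i\<in>UNIV. y $ i) - (\<Sum>i\<in>UNIV. d $ i * w $ i)) \<le> sqrt n * norm y + sqrt n * M2 * norm w"
    using cmod_sum_le[of y] cmod_sum_mult_le[OF d, of w]
      norm_triangle_ineq4[of "\<Sum>i\<in>UNIV. y $ i" "\<Sum>i\<in>UNIV. d $ i * w $ i"]
    unfolding n_def by linarith
  then have "cmod (c / of_nat CARD('n) * ((\<Sum>i\<in>UNIV. y $ i) - (\<Sum>i\<in>UNIV. d $ i * w $ i))) * sqrt n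
      \<le> M1 / n * (sqrt n * norm y + sqrt n * M2 * norm w) * sqrt n"
    unfolding norm_mult norm_divide using c \<open>0 \<le> M1\<close> \<open>0 < n\<close>
    by (intro mult_right_mono mult_mono) (auto simp: n_def divide_right_mono)
  also have "\<dots> = M1 / n * (norm y + M2 * norm w) * (sqrt n * sqrt n)"
    by (simp add: algebra_simps del: real_sqrt_mult_self)
  also have "\<dots> = M1 * (norm y + M2 * norm w)"
    using \<open>0 < n\<close> by simp
  finally show ?thesis
    by (simp add: n_def)
qed

lemma norm_le_by_coercivity:
  fixes w d y :: "complex^'n" and L :: "real^'n^'n"
  assumes y: "y = \<alpha> *s d + (\<chi> i. d $ i * w $ i) + \<phi> *s (of_real_matrix L *v w)"
    and \<alpha>: "\<alpha> = c / of_nat CARD('n) * ((\<Sum>i\<in>UNIV. y $ i) - (\<Sum>i\<in>UNIV. d $ i * w $ i))"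
    and coercive: "\<kappa> * (norm w)^2 \<le> cmod (\<Sum>i\<in>UNIV. cnj (w $ i) * (of_real_matrix L *v w) $ i)"
    and c: "cmod c \<le> M1" and d: "\<And>i. cmod (d $ i) \<le> M2"
  shows "(cmod \<phi> * \<kappa> - M2 - M1 * M2^2) * norm w \<le> (1 + M1 * M2) * norm y"
proof -
  define W Y where "W = norm w" and "Y = norm y"
  have "0 \<le> W" "0 \<le> Y" "0 \<le> M1" "0 \<le> M2"
    using c d[of undefined] norm_ge_zero order_trans unfolding W_def Y_def by blast+
  define P E F q where "P = (\<Sum>i\<in>UNIV. cnj (w $ i) * y $ i)"
    and "E = (\<Sum>i\<in>UNIV. d $ i * cnj (w $ i))"
    and "F = (\<Sum>i\<in>UNIV. cnj (w $ i) * (d $ i * w $ i))"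
    and "q = (\<Sum>i\<in>UNIV. cnj (w $ i) * (of_real_matrix L *v w) $ i)"
  have split: "\<phi> * q = P - \<alpha> * E - F"
    unfolding P_def E_def F_def q_def y by (simp add: sum.distrib sum_distrib_left algebra_simps)
  have P: "cmod P \<le> W * Y"
    using norm_sum_mult_le[of "\<chi> i. cnj (w $ i)" y] by (simp add: P_def W_def Y_def norm_cnj_vec)
  have "cmod \<alpha> * cmod E \<le> (cmod \<alpha> * sqrt CARD('n)) * (M2 * W)"
    using mult_left_mono[OF cmod_sum_mult_le[OF d, of "\<chi> i. cnj (w $ i)"], of "cmod \<alpha>"]
    by (simp add: E_def W_def norm_cnj_vec algebra_simps)
  also have "\<dots> \<le> M1 * (Y + M2 * W) * (M2 * W)"
    using cmod_scaled_sum_diff_le[OF c d, of y w] \<open>0 \<le> M2\<close> \<open>0 \<le> W\<close>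
    unfolding \<alpha>[symmetric] W_def Y_def by (intro mult_right_mono) simp_all
  finally have \<alpha>E: "cmod \<alpha> * cmod E \<le> M1 * M2 * (Y + M2 * W) * W"
    by (simp add: algebra_simps)
  have "cmod \<phi> * \<kappa> * W^2 \<le> cmod (\<phi> * q)"
    using coercive by (simp add: W_def q_def norm_mult mult.assoc mult_left_mono)
  also have "\<dots> \<le> cmod P + cmod \<alpha> * cmod E + cmod F"
    using norm_triangle_ineq4[of "P - \<alpha> * E" F] norm_triangle_ineq4[of P "\<alpha> * E"]
    unfolding split norm_mult by linarith
  also have "\<dots> \<le> W * Y + M1 * M2 * (Y + M2 * W) * W + M2 * W^2"
    using P \<alpha>E cmod_sum_cnj_mult_le[OF d, of w] unfolding F_def W_def by linarith
  finally have "((cmod \<phi> * \<kappa> - M2 - M1 * M2^2) * W) * W \<le> ((1 + M1 * M2) * Y) * W"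
    by (simp add: algebra_simps power2_eq_square)
  moreover have "0 \<le> (1 + M1 * M2) * Y"
    using \<open>0 \<le> Y\<close> \<open>0 \<le> M1\<close> \<open>0 \<le> M2\<close> by simp
  ultimately show ?thesis
    using \<open>0 \<le> W\<close> unfolding W_def Y_def
    by (cases "norm w = 0") (auto dest: mult_right_le_imp_le)
qed

lemma split_off_consensus:
  fixes L :: "real^'n^'n" and d z w :: "complex^'n" and \<phi> c \<alpha> :: complex
  defines "y \<equiv> (\<chi> i. d $ i * z $ i) + \<phi> *s (of_real_matrix L *v z)"
  assumes z: "z = w + (\<chi> i. \<alpha>)"
    and ones: "L *v (\<chi> i. 1) = 0" "(\<chi> i. 1) v* L = 0"
    and harmonic: "c * (\<Sum>i\<in>UNIV. d $ i) = of_nat CARD('n)"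
  shows "y = \<alpha> *s d + (\<chi> i. d $ i * w $ i) + \<phi> *s (of_real_matrix L *v w)"
    and "\<alpha> = c / of_nat CARD('n) * ((\<Sum>i\<in>UNIV. y $ i) - (\<Sum>i\<in>UNIV. d $ i * w $ i))"
proof -
  have "of_real_matrix L *v z = of_real_matrix L *v w"
    using of_real_matrix_mult_const[OF ones(1), of \<alpha>] by (simp add: z matrix_vector_right_distrib)
  then show y_w: "y = \<alpha> *s d + (\<chi> i. d $ i * w $ i) + \<phi> *s (of_real_matrix L *v w)"
    by (simp add: y_def z vec_eq_iff algebra_simps)
  then have "(\<Sum>i\<in>UNIV. y $ i) = \<alpha> * (\<Sum>i\<in>UNIV. d $ i) + (\<Sum>i\<in>UNIV. d $ i * w $ i)"
    using sum_of_real_matrix_mult[OF ones(2), of w]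
    by (simp add: sum.distrib sum_distrib_left[symmetric])
  then have "c / of_nat CARD('n) * ((\<Sum>i\<in>UNIV. y $ i) - (\<Sum>i\<in>UNIV. d $ i * w $ i))
      = \<alpha> * (c * (\<Sum>i\<in>UNIV. d $ i)) / of_nat CARD('n)"
    by (simp add: algebra_simps)
  then show "\<alpha> = c / of_nat CARD('n) * ((\<Sum>i\<in>UNIV. y $ i) - (\<Sum>i\<in>UNIV. d $ i * w $ i))"
    unfolding harmonic by simp
qed

lemma norm_deviation_from_consensus_le:
  fixes L :: "real^'n^'n" and d z :: "complex^'n" and \<phi> c :: complex and \<kappa> M1 M2 :: real
  defines "y \<equiv> (\<chi> i. d $ i * z $ i) + \<phi> *s (of_real_matrix L *v z)"
  assumes ones: "L *v (\<chi> i. 1) = 0" "(\<chi> i. 1) v* L = 0"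
    and coercive: "\<And>w. (\<Sum>i\<in>UNIV. w $ i) = 0 \<Longrightarrow>
      \<kappa> * (norm w)^2 \<le> cmod (\<Sum>i\<in>UNIV. cnj (w $ i) * (of_real_matrix L *v w) $ i)"
    and harmonic: "c * (\<Sum>i\<in>UNIV. d $ i) = of_nat CARD('n)"
    and c: "cmod c \<le> M1" and d: "\<And>i. cmod (d $ i) \<le> M2"
    and big: "M2 + M1 * M2^2 < cmod \<phi> * \<kappa>"
  shows "norm (z - (c / of_nat CARD('n) * (\<Sum>i\<in>UNIV. y $ i)) *s (\<chi> i. 1))
    \<le> (M1 * M2 + 1)^2 / (cmod \<phi> * \<kappa> - M2 - M1 * M2^2) * norm y"
proof -
  define den where "den = cmod \<phi> * \<kappa> - M2 - M1 * M2^2"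
  define \<alpha> where "\<alpha> = (\<Sum>i\<in>UNIV. z $ i) / of_nat CARD('n)"
  define w where "w = z - (\<chi> i. \<alpha>)"
  have w_sum: "(\<Sum>i\<in>UNIV. w $ i) = 0"
    by (simp add: w_def \<alpha>_def sum_subtractf)
  have "z = w + (\<chi> i. \<alpha>)"
    by (simp add: w_def)
  note split = split_off_consensus[OF this ones harmonic, of \<phi>, folded y_def]
  define G where "G = (\<Sum>i\<in>UNIV. d $ i * w $ i)"
  have "z - (c / of_nat CARD('n) * (\<Sum>i\<in>UNIV. y $ i)) *s (\<chi> i. 1)
      = w - (c / of_nat CARD('n) * G) *s (\<chi> i. 1)"
    using split(2)[folded G_def] by (simp add: w_def vec_eq_iff right_diff_distrib)
  also have "norm \<dots> \<le> (1 + M1 * M2) * norm w"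
    unfolding G_def by (rule norm_sub_scaled_ones_le[OF c d])
  also have "\<dots> \<le> (1 + M1 * M2) * ((1 + M1 * M2) * norm y / den)"
  proof -
    have "den * norm w \<le> (1 + M1 * M2) * norm y"
      using norm_le_by_coercivity[OF split coercive[OF w_sum] c d] by (simp add: den_def)
    moreover have "0 < den"
      using big by (simp add: den_def)
    moreover have "0 \<le> M1" "0 \<le> M2"
      using c d[of undefined] norm_ge_zero order_trans by blast+
    ultimately show ?thesis
      by (intro mult_left_mono) (simp_all add: pos_le_divide_eq mult.commute)
  qed
  also have "\<dots> = (M1 * M2 + 1)^2 / den * norm y"
    by (simp add: power2_eq_square algebra_simps)
  finally show ?thesis
    unfolding den_def .
qed

lemma matrix_inv_right:
  fixes A :: "'a::field^'n^'n"
  assumes "invertible A"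
  shows "A ** matrix_inv A = mat 1"
proof -
  have "\<exists>A'. A ** A' = mat 1 \<and> A' ** A = mat 1"
    using assms unfolding invertible_def .
  then show ?thesis
    unfolding matrix_inv_def by (rule someI2_ex) blast
qed

lemma invertible_and_onorm_inverse_diff_le:
  fixes A B :: "complex^'n^'n"
  assumes approx: "\<And>z. norm (z - B *v (A *v z)) \<le> K * norm (A *v z)"
  shows "invertible A \<and> onorm (\<lambda>y. (matrix_inv A - B) *v y) \<le> K"
proof
  have "inj ((*v) A)"
    unfolding vec.inj_iff_eq_0
  proof (intro allI impI)
    fix z
    assume "A *v z = 0"
    then show "z = 0"
      using approx[of z] by simp
  qed
  then show inv: "invertible A"
    using invertible_left_inverse matrix_left_invertible_injective by blast
  show "onorm (\<lambda>y. (matrix_inv A - B) *v y) \<le> K"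
  proof (rule onorm_le)
    fix y :: "complex^'n"
    have "A *v (matrix_inv A *v y) = y"
      using matrix_inv_right[OF inv] by (simp add: matrix_vector_mul_assoc)
    then show "norm ((matrix_inv A - B) *v y) \<le> K * norm y"
      using approx[of "matrix_inv A *v y"] by (simp add: matrix_vector_mult_diff_rdistrib)
  qed
qed

theorem lemma1:
  fixes g :: "'n::finite \<Rightarrow> tf" and f :: tf and L :: "real^'n^'n"
    and s0 :: complex and M1 M2 :: real
  defines "gbar \<equiv> inverse ((\<Sum>i\<in>UNIV. inverse (g i)) / of_nat CARD('n))"
  defines "A \<equiv> (\<chi> i j. (if i = j then tf_eval (inverse (g i)) s0 else 0)
                     + tf_eval f s0 * complex_of_real (L $ i $ j)) :: complex^'n^'n"
  defines "T \<equiv> matrix_inv A"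
  assumes n2: "CARD('n) \<ge> 2"
    and proper_g: "\<And>i. proper_tf (g i)" and proper_f: "proper_tf f"
    and lap: "graph_laplacian L"
    and g_nz: "\<And>i. g i \<noteq> 0"
    and avg_nz: "(\<Sum>i\<in>UNIV. inverse (g i)) \<noteq> 0"
    and f_np: "\<not> is_pole f s0"
    and ginv_np: "\<And>i. \<not> is_pole (inverse (g i)) s0"
    and gbar_np: "\<not> is_pole gbar s0"
    and M1: "M1 > 0" and M2: "M2 > 0"
    and bM1: "cmod (tf_eval gbar s0) \<le> M1"
    and bM2: "\<And>i. cmod (tf_eval (inverse (g i)) s0) \<le> M2"
    and big: "cmod (tf_eval f s0) * eig L 2 > M2 + M1 * M2\<^sup>2"
  shows "invertible A
    \<and> onorm (\<lambda>x. (T - (\<chi> i j. tf_eval gbar s0 / of_nat CARD('n))) *v x)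
        \<le> (M1 * M2 + 1)\<^sup>2 / (cmod (tf_eval f s0) * eig L 2 - M2 - M1 * M2\<^sup>2)"
proof -
  define d :: "complex^'n" where "d = (\<chi> i. tf_eval (inverse (g i)) s0)"
  define c where "c = tf_eval gbar s0"
  have harmonic: "c * (\<Sum>i\<in>UNIV. d $ i) = of_nat CARD('n)"
    using tf_eval_inverse_mean_mult_sum[OF ginv_np avg_nz gbar_np[unfolded gbar_def]]
    by (simp add: c_def d_def gbar_def)
  have sym: "transpose L = L" and ones: "L *v (\<chi> i. 1) = 0"
    using lap unfolding graph_laplacian_def by auto
  then have "(\<chi> i. 1) v* L = 0"
    by (metis transpose_matrix_vector)
  note estimate = norm_deviation_from_consensus_le[OF ones this
      laplacian_eig_2_le_complex_rayleigh[OF lap n2] harmonic]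
  have Az: "A *v z = (\<chi> i. d $ i * z $ i) + tf_eval f s0 *s (of_real_matrix L *v z)" for z
    by (simp add: A_def d_def of_real_matrix_def vec_eq_iff matrix_vector_mult_def distrib_right
        sum.distrib if_distrib[of "\<lambda>u. u * _"] sum_distrib_left mult.assoc cong: if_cong)
  have B: "(\<chi> i j. c / of_nat CARD('n)) *v y = (c / of_nat CARD('n) * (\<Sum>i\<in>UNIV. y $ i)) *s (\<chi> i. 1)"
    for y :: "complex^'n"
    by (simp add: vec_eq_iff matrix_vector_mult_def sum_distrib_left)
  have "norm (z - (\<chi> i j. c / of_nat CARD('n)) *v (A *v z))
      \<le> (M1 * M2 + 1)\<^sup>2 / (cmod (tf_eval f s0) * eig L 2 - M2 - M1 * M2\<^sup>2) * norm (A *v z)" for z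
    unfolding B Az using bM1 bM2 big by (intro estimate) (simp_all add: c_def d_def)
  then show ?thesis
    unfolding T_def c_def[symmetric] by (rule invertible_and_onorm_inverse_diff_le)
qed

end
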